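(* In the approximating model (see context) with exponential arrival clocks of rate $\lambda>0$, heavy-traffic condition $\lambda\mathbb E[S]=1$ and $\mathbb E[S^2]<\infty$, for every $T>0$, $$n^{-1/3}\max_{k\le Tn^{2/3}}A_n(k)\xrightarrow{\ \mathbb P\ }0\qquad(n\to\infty).$$
   Context: Approximating model: fix $n$ and $\beta\in\mathbb R$. Let $T_1,\dots,T_n$ be i.i.d. nonnegative arrival clocks, and let $S_1,S_2,\dots$ be i.i.d. nonnegative service requirements (generic copy $S$), independent of the clocks. Put $D_j:=\frac{S_j}{n}(1+\beta n^{-1/3})$, $\Sigma_0:=0$, $\Sigma_k:=\sum_{j=1}^k D_j$. All $n$ customers start in the population. Set $Q_n(0)=0$ and for $k\ge1$, $Q_n(k)=(Q_n(k-1)+A_n(k)-1)^+$ with $A_n(k)=\sum_{i\notin\nu_k}\mathbf 1\{\Sigma_{k-1}\le T_i\le\Sigma_k\}$, where $\nu_k$ is the set of customers no longer in the population at the beginning of the $k$-th service: a customer leaves the population when its clock rings during a service, and whenever the queue is empty after a service completion, the customer of the population with the smallest clock is removed from the population and immediately put into service. *)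

theory Defs
  imports "HOL-Probability.Probability"
begin

definition svc_D :: "real \<Rightarrow> nat \<Rightarrow> (nat \<Rightarrow> real) \<Rightarrow> nat \<Rightarrow> real" where
  "svc_D \<beta> n s j = s j / real n * (1 + \<beta> * real n powr (-1/3))"

definition Sig :: "real \<Rightarrow> nat \<Rightarrow> (nat \<Rightarrow> real) \<Rightarrow> nat \<Rightarrow> real" where
  "Sig \<beta> n s k = (\<Sum>j\<in>{1..k}. svc_D \<beta> n s j)"

definition pick_min :: "(nat \<Rightarrow> real) \<Rightarrow> nat set \<Rightarrow> nat set" where
  "pick_min t P = (if P = {} then {}
     else {LEAST i. i \<in> P \<and> (\<forall>j\<in>P. t i \<le> t j)})"

(* customers 0..<n of the population (not in nu) whose clock rings during the
   (k+1)-th service, i.e. in [Sigma_k, Sigma_(k+1)] *)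
definition arrivals ::
  "real \<Rightarrow> nat \<Rightarrow> (nat \<Rightarrow> real) \<Rightarrow> (nat \<Rightarrow> real) \<Rightarrow> nat set \<Rightarrow> nat \<Rightarrow> nat set" where
  "arrivals \<beta> n t s \<nu> k =
     {i \<in> {..<n} - \<nu>. Sig \<beta> n s k \<le> t i \<and> t i \<le> Sig \<beta> n s (Suc k)}"

(* qstate k = (nu_(k+1), Q_n(k)) : the set of customers no longer in the
   population at the beginning of the (k+1)-th service, and the queue length
   after the k-th service. *)
fun qstate :: "real \<Rightarrow> nat \<Rightarrow> (nat \<Rightarrow> real) \<Rightarrow> (nat \<Rightarrow> real) \<Rightarrow> nat \<Rightarrow> nat set \<times> nat" where
  "qstate \<beta> n t s 0 = (pick_min t {..<n}, 0)"
| "qstate \<beta> n t s (Suc k) =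
     (let \<nu> = fst (qstate \<beta> n t s k); q = snd (qstate \<beta> n t s k);
          arr = arrivals \<beta> n t s \<nu> k;
          q' = (q + card arr) - 1;
          \<nu>' = \<nu> \<union> arr
      in (if q' = 0 then \<nu>' \<union> pick_min t ({..<n} - \<nu>') else \<nu>', q'))"

definition A_n :: "real \<Rightarrow> nat \<Rightarrow> (nat \<Rightarrow> real) \<Rightarrow> (nat \<Rightarrow> real) \<Rightarrow> nat \<Rightarrow> nat" where
  "A_n \<beta> n t s k = card (arrivals \<beta> n t s (fst (qstate \<beta> n t s (k - 1))) (k - 1))"

definition Q_n :: "real \<Rightarrow> nat \<Rightarrow> (nat \<Rightarrow> real) \<Rightarrow> (nat \<Rightarrow> real) \<Rightarrow> nat \<Rightarrow> nat" where
  "Q_n \<beta> n t s k = snd (qstate \<beta> n t s k)"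

definition maxA :: "real \<Rightarrow> real \<Rightarrow> nat \<Rightarrow> (nat \<Rightarrow> real) \<Rightarrow> (nat \<Rightarrow> real) \<Rightarrow> nat" where
  "maxA \<beta> Tm n t s =
     Max (insert 0 (A_n \<beta> n t s ` {k. 1 \<le> k \<and> real k \<le> Tm * real n powr (2/3)}))"

definition conv_prob_zero :: "'a measure \<Rightarrow> (nat \<Rightarrow> 'a \<Rightarrow> real) \<Rightarrow> bool" where
  "conv_prob_zero M X \<longleftrightarrow>
     (\<forall>\<epsilon>>0. ((\<lambda>n. measure M {\<omega> \<in> space M. \<bar>X n \<omega>\<bar> > \<epsilon>}) \<longlongrightarrow> 0) sequentially)"

end

theory Submission
  imports Defs "HOL-Real_Asymp.Real_Asymp"
begin

text \<open>
  Cut the time axis into windows [j h, (j + 2) h] with h of order n^(-2/3). If each of the first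
  T n^(2/3) service times is at most c, of order n^(1/3), then every service period
  [\<Sigma>(k-1), \<Sigma>(k)] has length at most h and lies in one window, so A_n(k) is at most the number
  of clocks ringing in that window. A clock rings in a fixed window with probability O(h), and
  these probabilities are summable over the windows, so a Chernoff bound for the n independent
  clocks makes a window with more than \<epsilon> n^(1/3) clocks unlikely. The service times are
  controlled by Markov's inequality for S^2 1{S > c}, which gives o(n^(-2/3)) per service because
  E S^2 < \<infinity>.
\<close>

lemma exp_minus_one_le_mult_exp: "0 \<le> (x::real) \<Longrightarrow> exp x - 1 \<le> x * exp x"
proof -
  assume "0 \<le> x"
  have "1 - x \<le> exp (- x)" using exp_ge_add_one_self[of "-x"] by simp
  hence "(1 - x) * exp x \<le> exp (-x) * exp x" by (intro mult_right_mono) auto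
  thus ?thesis by (simp add: exp_minus field_simps)
qed

lemma (in prob_space) expectation_exp_indicator:
  assumes [measurable]: "Y \<in> borel_measurable M" "W \<in> sets borel"
  shows "expectation (\<lambda>\<omega>. exp (indicator W (Y \<omega>) :: real))
    = 1 + (exp 1 - 1) * prob {\<omega>\<in>space M. Y \<omega> \<in> W}"
proof -
  have A: "{\<omega>\<in>space M. Y \<omega> \<in> W} \<in> events" by measurable
  have "expectation (\<lambda>\<omega>. exp (indicator W (Y \<omega>) :: real))
      = expectation (\<lambda>\<omega>. 1 + (exp 1 - 1) * indicator {\<omega>\<in>space M. Y \<omega> \<in> W} \<omega>)"
    by (intro Bochner_Integration.integral_cong) (auto simp: indicator_def)
  also have "\<dots> = 1 + (exp 1 - 1) * prob {\<omega>\<in>space M. Y \<omega> \<in> W}"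
    using A by (subst Bochner_Integration.integral_add)
      (auto simp: prob_space Int_absorb2 sets.sets_into_space
        intro!: integrable_real_indicator emeasure_finite[THEN less_top[THEN iffD1]])
  finally show ?thesis .
qed

lemma (in prob_space) exp_sum_indicator_moment:
  fixes X :: "'i \<Rightarrow> 'a \<Rightarrow> real"
  assumes fin: "finite I" and ind: "indep_vars (\<lambda>_. borel) X I" and W: "W \<in> sets borel"
    and pq: "\<And>i. i\<in>I \<Longrightarrow> prob {\<omega>\<in>space M. X i \<omega> \<in> W} \<le> q" and q: "0 \<le> q"
  shows "integrable M (\<lambda>\<omega>. exp (\<Sum>i\<in>I. indicator W (X i \<omega>) :: real))"
    and "expectation (\<lambda>\<omega>. exp (\<Sum>i\<in>I. indicator W (X i \<omega>) :: real))
      \<le> exp (card I * (exp 1 - 1) * q)"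
proof -
  have [measurable]: "\<And>i. i\<in>I \<Longrightarrow> X i \<in> borel_measurable M"
    using ind by (auto simp: indep_vars_def)
  define Z where "Z i \<omega> = exp (indicator W (X i \<omega>) :: real)" for i \<omega>
  have "(\<lambda>x. exp (indicator W x :: real)) \<in> borel_measurable borel"
    using W by measurable
  hence indZ: "indep_vars (\<lambda>_. borel) Z I"
    unfolding Z_def using indep_vars_compose2[OF ind, of "\<lambda>i x. exp (indicator W x :: real)"]
    by simp
  have intZ: "i\<in>I \<Longrightarrow> integrable M (Z i)" for i
    unfolding Z_def using W
    by (intro integrable_const_bound[where B="exp 1"]) (auto simp: indicator_def)
  have prod_Z: "(\<lambda>\<omega>. exp (\<Sum>i\<in>I. indicator W (X i \<omega>) :: real)) = (\<lambda>\<omega>. \<Prod>i\<in>I. Z i \<omega>)"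
    using fin by (simp add: exp_sum Z_def)
  show "integrable M (\<lambda>\<omega>. exp (\<Sum>i\<in>I. indicator W (X i \<omega>) :: real))"
    unfolding prod_Z by (rule indep_vars_integrable[OF fin indZ intZ])
  have "expectation (\<lambda>\<omega>. \<Prod>i\<in>I. Z i \<omega>) = (\<Prod>i\<in>I. expectation (Z i))"
    by (rule indep_vars_lebesgue_integral[OF fin indZ intZ])
  also have "\<dots> \<le> (\<Prod>i\<in>I. 1 + (exp 1 - 1) * q)"
  proof (rule prod_mono)
    fix i assume i: "i\<in>I"
    have "X i \<in> borel_measurable M" using i ind by (auto simp: indep_vars_def)
    hence "expectation (Z i) = 1 + (exp 1 - 1) * prob {\<omega>\<in>space M. X i \<omega> \<in> W}"
      unfolding Z_def by (rule expectation_exp_indicator[OF _ W])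
    also have "\<dots> \<le> 1 + (exp 1 - 1) * q"
      using pq[OF i] by (intro add_left_mono mult_left_mono) auto
    finally have "expectation (Z i) \<le> 1 + (exp 1 - 1) * q" .
    moreover have "0 \<le> expectation (Z i)" by (rule integral_nonneg_AE) (auto simp: Z_def)
    ultimately show "0 \<le> expectation (Z i) \<and> expectation (Z i) \<le> 1 + (exp 1 - 1) * q" by simp
  qed
  also have "\<dots> = (1 + (exp 1 - 1) * q) ^ card I" by simp
  also have "\<dots> \<le> exp ((exp 1 - 1) * q) ^ card I"
    using q exp_ge_add_one_self[of "(exp 1 - 1) * q"] by (intro power_mono) (auto simp: add.commute)
  also have "\<dots> = exp (card I * (exp 1 - 1) * q)"
    by (simp add: exp_of_nat_mult[symmetric] mult.assoc)
  finally show "expectation (\<lambda>\<omega>. exp (\<Sum>i\<in>I. indicator W (X i \<omega>) :: real))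
      \<le> exp (card I * (exp 1 - 1) * q)"
    unfolding prod_Z .
qed

lemma (in prob_space) prob_sum_indicator_gt_le:
  fixes X :: "'i \<Rightarrow> 'a \<Rightarrow> real"
  assumes fin: "finite I" and ind: "indep_vars (\<lambda>_. borel) X I" and W: "W \<in> sets borel"
    and pq: "\<And>i. i\<in>I \<Longrightarrow> prob {\<omega>\<in>space M. X i \<omega> \<in> W} \<le> q" and q: "0 \<le> q" and a: "0 < a"
  shows "prob {\<omega>\<in>space M. a < (\<Sum>i\<in>I. indicator W (X i \<omega>))}
     \<le> (card I * (exp 1 - 1) * q) * exp (card I * (exp 1 - 1) * q) / (exp a - 1)"
proof -
  have [measurable]: "\<And>i. i\<in>I \<Longrightarrow> X i \<in> borel_measurable M"
    using ind by (auto simp: indep_vars_def)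
  note [measurable] = W
  define x where "x = card I * (exp 1 - 1) * q"
  define u where "u \<omega> = exp (\<Sum>i\<in>I. indicator W (X i \<omega>) :: real) - 1" for \<omega>
  note moment = exp_sum_indicator_moment[OF fin ind W pq q]
  have ea: "0 < exp a - 1" using a by simp
  have "prob {\<omega>\<in>space M. a < (\<Sum>i\<in>I. indicator W (X i \<omega>))}
      \<le> prob {\<omega>\<in>space M. exp a - 1 \<le> u \<omega>}"
  proof (rule finite_measure_mono)
    show "{\<omega> \<in> space M. exp a - 1 \<le> u \<omega>} \<in> events" unfolding u_def by measurable
  qed (auto simp: u_def less_imp_le)
  also have "\<dots> \<le> expectation u / (exp a - 1)"
  proof (rule integral_Markov_inequality_measure[OF _ sets.top _ ea])
    show "integrable M u" unfolding u_def using moment(1) by simp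
  qed (auto simp: u_def intro!: sum_nonneg)
  also have "expectation u = expectation (\<lambda>\<omega>. exp (\<Sum>i\<in>I. indicator W (X i \<omega>) :: real)) - 1"
    unfolding u_def using moment(1) by (simp add: prob_space)
  also have "\<dots> \<le> x * exp x"
    using moment(2) exp_minus_one_le_mult_exp[of x] q by (simp add: x_def)
  finally show ?thesis using ea by (simp add: x_def divide_right_mono)
qed

definition exp_cdf :: "real \<Rightarrow> real \<Rightarrow> real" where
  "exp_cdf l x = 1 - exp (- l * max x 0)"

lemma exp_cdf_nonneg: "0 < l \<Longrightarrow> 0 \<le> exp_cdf l x"
  by (simp add: exp_cdf_def)

lemma exp_cdf_le_1: "exp_cdf l x \<le> 1"
  by (simp add: exp_cdf_def)

lemma exp_cdf_diff_le:
  assumes "0 < l" "w \<le> v"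
  shows "exp_cdf l v - exp_cdf l w \<le> l * (v - w)"
proof -
  define u where "u = l * max w 0"
  define z where "z = l * max v 0"
  have uz: "u \<le> z" "0 \<le> u" using assms by (auto simp: u_def z_def intro!: mult_left_mono)
  have "exp (-u) - exp (-z) = exp (-u) * (1 - exp (-(z - u)))"
    by (simp add: exp_diff exp_minus field_simps)
  also have "\<dots> \<le> 1 * (z - u)"
  proof (rule mult_mono)
    show "1 - exp (-(z-u)) \<le> z - u"
      using exp_ge_add_one_self[of "u - z"] by (simp add: algebra_simps)
  qed (use uz in auto)
  also have "z - u \<le> l * (v - w)"
  proof -
    have "l * (max v 0 - max w 0) \<le> l * (v - w)" using assms by (intro mult_left_mono) auto
    thus ?thesis by (simp add: z_def u_def algebra_simps)
  qed
  finally show ?thesis by (simp add: exp_cdf_def u_def z_def)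
qed

lemma (in prob_space) prob_exponential_le:
  assumes D: "distributed M lborel X (exponential_density l)" and l: "0 < l"
  shows "prob {\<omega>\<in>space M. X \<omega> \<le> x} = exp_cdf l x"
proof (cases "0 \<le> x")
  case True
  thus ?thesis using exponential_distributedD_le[OF D True l] by (simp add: exp_cdf_def mult.commute)
next
  case False
  have [measurable]: "X \<in> borel_measurable M"
    using distributed_measurable[OF D] by simp
  have "prob {\<omega>\<in>space M. X \<omega> \<le> x} \<le> prob {\<omega>\<in>space M. X \<omega> \<le> 0}"
    using False by (intro finite_measure_mono) auto
  also have "\<dots> = 0" using exponential_distributedD_le[OF D _ l, of 0] by simp
  finally show ?thesis using False by (simp add: exp_cdf_def measure_nonneg order_antisym)
qed

lemma (in prob_space) prob_exponential_atLeastAtMost_le: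
  assumes D: "distributed M lborel X (exponential_density l)" and l: "0 < l"
    and "w < u" "w \<le> v"
  shows "prob {\<omega>\<in>space M. X \<omega> \<in> {u..v}} \<le> exp_cdf l v - exp_cdf l w"
proof -
  have [measurable]: "X \<in> borel_measurable M"
    using distributed_measurable[OF D] by simp
  have "prob {\<omega>\<in>space M. X \<omega> \<in> {u..v}} \<le> prob ({\<omega>\<in>space M. X \<omega> \<le> v} - {\<omega>\<in>space M. X \<omega> \<le> w})"
    using \<open>w < u\<close> by (intro finite_measure_mono) auto
  also have "\<dots> = prob {\<omega>\<in>space M. X \<omega> \<le> v} - prob {\<omega>\<in>space M. X \<omega> \<le> w}"
    using \<open>w \<le> v\<close> by (intro finite_measure_Diff) auto
  finally show ?thesis using prob_exponential_le[OF D l] by simp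
qed

definition window :: "real \<Rightarrow> nat \<Rightarrow> real set" where
  "window h j = {real j * h..(real j + 2) * h}"

lemma window_borel [measurable]: "window h j \<in> sets borel"
  by (simp add: window_def)

text \<open>
  Starting the
  difference at \<open>(j - 1) h < j h\<close> avoids having to show that single points are null sets;
  the price is an interval of length 3 h instead of 2 h, whence the factors 3 below.
\<close>
definition window_mass :: "real \<Rightarrow> real \<Rightarrow> nat \<Rightarrow> real" where
  "window_mass l h j = exp_cdf l ((real j + 2) * h) - exp_cdf l ((real j - 1) * h)"

lemma window_mass_nonneg: "0 < l \<Longrightarrow> 0 < h \<Longrightarrow> 0 \<le> window_mass l h j"
  unfolding window_mass_def exp_cdf_def by (auto intro!: mult_right_mono)

lemma window_mass_le: "0 < l \<Longrightarrow> 0 < h \<Longrightarrow> window_mass l h j \<le> 3 * l * h"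
  unfolding window_mass_def using exp_cdf_diff_le[of l "(real j - 1) * h" "(real j + 2) * h"]
  by (simp add: algebra_simps)

lemma sum_window_mass_le:
  assumes "0 < l" "0 < h"
  shows "(\<Sum>j<J. window_mass l h j) \<le> 3"
proof -
  define f where "f i = exp_cdf l ((real i - 1) * h)" for i :: nat
  have telescope: "window_mass l h j
      = (f (Suc (j+2)) - f (j+2)) + (f (Suc (j+1)) - f (j+1)) + (f (Suc j) - f j)" for j
    by (simp add: window_mass_def f_def algebra_simps)
  have "(\<Sum>j<J. window_mass l h j)
      = (\<Sum>j<J. (\<lambda>i. f (i+2)) (Suc j) - (\<lambda>i. f (i+2)) j)
        + (\<Sum>j<J. (\<lambda>i. f (i+1)) (Suc j) - (\<lambda>i. f (i+1)) j) + (\<Sum>j<J. f (Suc j) - f j)"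
    unfolding telescope sum.distrib by simp
  also have "\<dots> = (f (J+2) - f 2) + (f (J+1) - f 1) + (f J - f 0)"
    using sum_lessThan_telescope[of "\<lambda>i. f (i+2)" J] sum_lessThan_telescope[of "\<lambda>i. f (i+1)" J]
      sum_lessThan_telescope[of f J]
    by (simp add: numeral_2_eq_2)
  also have "\<dots> \<le> 3"
    using exp_cdf_nonneg[OF assms(1)] exp_cdf_le_1 unfolding f_def by (smt (verit))
  finally show ?thesis .
qed

lemma (in prob_space) prob_crowded_window_le:
  fixes X :: "'i \<Rightarrow> 'a \<Rightarrow> real"
  assumes l: "0 < l" and h: "0 < h" and a: "0 < a" and fin: "finite I"
    and ind: "indep_vars (\<lambda>_. borel) X I"
    and D: "\<And>i. i \<in> I \<Longrightarrow> distributed M lborel (X i) (exponential_density l)"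
    and small: "card I * (exp 1 - 1) * (3 * l * h) \<le> a / 2"
  shows "prob (\<Union>j. {\<omega>\<in>space M. a < (\<Sum>i\<in>I. indicator (window h j) (X i \<omega>))})
     \<le> 3 * (card I * (exp 1 - 1) * exp (a/2) / (exp a - 1))"
proof -
  have [measurable]: "\<And>i. i\<in>I \<Longrightarrow> X i \<in> borel_measurable M"
    using ind by (auto simp: indep_vars_def)
  define A where "A j = {\<omega>\<in>space M. a < (\<Sum>i\<in>I. indicator (window h j) (X i \<omega>))}" for j
  define K where "K = card I * (exp 1 - 1) * exp (a/2) / (exp a - 1)"
  have ea: "0 < exp a - 1" using a by simp
  have K0: "0 \<le> K" using ea by (simp add: K_def)
  have A_le: "prob (A j) \<le> K * window_mass l h j" for j
  proof -
    define x where "x = card I * (exp 1 - 1) * window_mass l h j"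
    have x0: "0 \<le> x" using window_mass_nonneg[OF l h] by (simp add: x_def)
    have "card I * (exp 1 - 1) * window_mass l h j \<le> card I * (exp 1 - 1) * (3 * l * h)"
      using window_mass_le[OF l h] by (intro mult_left_mono) auto
    hence xa: "x \<le> a/2" using small by (simp add: x_def)
    have "prob (A j) \<le> x * exp x / (exp a - 1)"
      unfolding A_def x_def
    proof (rule prob_sum_indicator_gt_le[OF fin ind window_borel])
      fix i assume "i \<in> I"
      show "prob {\<omega> \<in> space M. X i \<omega> \<in> window h j} \<le> window_mass l h j"
        unfolding window_def window_mass_def
        using h by (intro prob_exponential_atLeastAtMost_le[OF D[OF \<open>i\<in>I\<close>] l]) simp_all
    qed (use a window_mass_nonneg[OF l h] in auto)
    also have "\<dots> \<le> x * exp (a/2) / (exp a - 1)"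
      using ea x0 xa by (intro divide_right_mono mult_left_mono) auto
    also have "\<dots> = K * window_mass l h j" by (simp add: K_def x_def)
    finally show ?thesis .
  qed
  have sq: "summable (window_mass l h)"
    by (rule summableI_nonneg_bounded[where x=3])
      (auto intro: window_mass_nonneg[OF l h] sum_window_mass_le[OF l h])
  have sKq: "summable (\<lambda>j. K * window_mass l h j)" using sq by (rule summable_mult)
  have sA: "summable (\<lambda>j. prob (A j))"
    by (rule summable_comparison_test'[OF sKq]) (use A_le in auto)
  have "prob (\<Union>j. A j) \<le> (\<Sum>j. prob (A j))"
    by (rule finite_measure_subadditive_countably[OF _ sA]) (auto simp: A_def)
  also have "\<dots> \<le> (\<Sum>j. K * window_mass l h j)" by (rule suminf_le[OF A_le sA sKq])
  also have "\<dots> = K * (\<Sum>j. window_mass l h j)" using sq by (rule suminf_mult)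
  also have "\<dots> \<le> K * 3"
    by (intro mult_left_mono K0 suminf_le_const[OF sq] sum_window_mass_le[OF l h])
  finally show ?thesis by (simp add: A_def K_def mult.commute)
qed

lemma mem_window_floor:
  assumes h: "0 < h" and "0 \<le> t" "x \<le> t" "t \<le> x + d" "d \<le> h"
  shows "t \<in> window h (nat \<lfloor>x / h\<rfloor>)"
proof (cases "x < 0")
  case True
  hence "nat \<lfloor>x / h\<rfloor> = 0" using h by (simp add: divide_neg_pos)
  thus ?thesis using assms True by (auto simp: window_def)
next
  case False
  hence j: "real (nat \<lfloor>x / h\<rfloor>) = of_int \<lfloor>x / h\<rfloor>" using h by simp
  have "of_int \<lfloor>x / h\<rfloor> * h \<le> x" "x < (of_int \<lfloor>x / h\<rfloor> + 1) * h"
    using h by (metis floor_divide_lower, metis floor_divide_upper)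
  thus ?thesis using j assms by (auto simp: window_def algebra_simps)
qed

lemma finite_index_set: "finite {k::nat. 1 \<le> k \<and> real k \<le> y}"
  by (rule finite_subset[of _ "{..nat \<lceil>y\<rceil>}"]) (auto simp: le_nat_iff le_ceiling_iff)

lemma card_index_set_le:
  assumes "0 \<le> y"
  shows "real (card {k::nat. 1 \<le> k \<and> real k \<le> y}) \<le> y"
proof -
  have "{k::nat. 1 \<le> k \<and> real k \<le> y} = {1..nat \<lfloor>y\<rfloor>}"
    using assms by (auto simp: le_nat_iff le_floor_iff)
  thus ?thesis using assms by simp
qed

lemma maxA_attained:
  assumes "maxA \<beta> Tm n t s \<noteq> 0"
  obtains k where "1 \<le> k" "real k \<le> Tm * real n powr (2/3)" "maxA \<beta> Tm n t s = A_n \<beta> n t s k"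
proof -
  let ?K = "{k::nat. 1 \<le> k \<and> real k \<le> Tm * real n powr (2/3)}"
  have "maxA \<beta> Tm n t s \<in> insert 0 (A_n \<beta> n t s ` ?K)"
    unfolding maxA_def using finite_index_set by (intro Max_in) auto
  thus ?thesis using assms that by auto
qed

lemma A_n_le_window_count:
  assumes h: "0 < h" and t: "\<forall>i<n. 0 \<le> t i" and k: "1 \<le> k" and D: "svc_D \<beta> n s k \<le> h"
  shows "\<exists>j. real (A_n \<beta> n t s k) \<le> (\<Sum>i<n. indicator (window h j) (t i))"
proof
  define x where "x = Sig \<beta> n s (k - 1)"
  define W where "W = window h (nat \<lfloor>x / h\<rfloor>)"
  have "Sig \<beta> n s (Suc (k - 1)) = x + svc_D \<beta> n s (Suc (k - 1))"
    by (simp add: x_def Sig_def)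
  hence Sig_k: "Sig \<beta> n s (Suc (k - 1)) = x + svc_D \<beta> n s k"
    using k by simp
  have "A_n \<beta> n t s k \<le> card ({..<n} \<inter> {i. t i \<in> W})"
    unfolding A_n_def arrivals_def Sig_k
    using t mem_window_floor[OF h _ _ _ D] by (intro card_mono) (auto simp: x_def W_def)
  hence "real (A_n \<beta> n t s k) \<le> real (card ({..<n} \<inter> {i. t i \<in> W}))" by simp
  also have "real (card ({..<n} \<inter> {i. t i \<in> W})) = (\<Sum>i<n. indicator {i. t i \<in> W} i)"
    by (simp add: indicator_def sum.If_cases)
  also have "\<dots> = (\<Sum>i<n. indicator W (t i))"
    by (simp add: indicator_def)
  finally show "real (A_n \<beta> n t s k) \<le> (\<Sum>i<n. indicator W (t i))" .
qed

lemma svc_D_le: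
  assumes "s k \<le> c" "0 \<le> 1 + \<beta> * real n powr (-1/3)"
    and "c / real n * (1 + \<beta> * real n powr (-1/3)) \<le> h"
  shows "svc_D \<beta> n s k \<le> h"
  unfolding svc_D_def using assms
  by (meson divide_right_mono mult_right_mono of_nat_0_le_iff order_trans)

lemma maxA_gt_imp_crowded_window:
  assumes h: "0 < h" and a: "0 \<le> a" and t: "\<forall>i<n. 0 \<le> t i"
    and D: "\<forall>k. 1 \<le> k \<and> real k \<le> Tm * real n powr (2/3) \<longrightarrow> svc_D \<beta> n s k \<le> h"
    and big: "a < real (maxA \<beta> Tm n t s)"
  shows "\<exists>j. a < (\<Sum>i<n. indicator (window h j) (t i))"
proof -
  obtain k where "1 \<le> k" "real k \<le> Tm * real n powr (2/3)" "maxA \<beta> Tm n t s = A_n \<beta> n t s k"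
    using maxA_attained big a by (metis of_nat_0 not_less order_refl)
  moreover from this obtain j where "real (A_n \<beta> n t s k) \<le> (\<Sum>i<n. indicator (window h j) (t i))"
    using A_n_le_window_count[OF h t] D by blast
  ultimately show ?thesis using big by (intro exI[of _ j]) linarith
qed

lemma less_mult_powr_iff:
  assumes "0 < (n::real)"
  shows "\<epsilon> < n powr (-1/3) * x \<longleftrightarrow> \<epsilon> * n powr (1/3) < x"
proof -
  have "n powr (-1/3) * x * n powr (1/3) = x" using assms by (simp add: powr_add[symmetric])
  moreover have "0 < n powr (1/3)" using assms by simp
  ultimately show ?thesis by (metis mult_less_cancel_right_pos)
qed

definition sq_tail :: "real measure \<Rightarrow> real \<Rightarrow> real" where
  "sq_tail Sd c = (\<integral>x. x^2 * indicator {c<..} x \<partial>Sd)"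

lemma sq_tail_nonneg: "0 \<le> sq_tail Sd c"
  unfolding sq_tail_def by (rule integral_nonneg_AE) (auto simp: indicator_def)

lemma prob_gt_le_sq_tail:
  fixes X :: "'a \<Rightarrow> real"
  assumes P: "prob_space M" and X[measurable]: "X \<in> borel_measurable M"
    and Sd: "distr M borel X = Sd" and int: "integrable Sd (\<lambda>x. x^2)" and c: "0 < c"
  shows "measure M {\<omega>\<in>space M. c < X \<omega>} \<le> sq_tail Sd c / c^2"
proof -
  interpret Sd: prob_space Sd unfolding Sd[symmetric] by (rule prob_space.prob_space_distr[OF P X])
  have sSd: "sets Sd = sets borel" and spSd: "space Sd = UNIV" unfolding Sd[symmetric] by simp_all
  have "measure M {\<omega>\<in>space M. c < X \<omega>} = measure Sd {c<..}"
    unfolding Sd[symmetric] by (subst measure_distr) (auto simp: vimage_def Int_def conj_commute)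
  also have "\<dots> \<le> measure Sd {x\<in>space Sd. c^2 \<le> x^2 * indicator {c<..} x}"
  proof (rule Sd.finite_measure_mono)
    show "{c<..} \<subseteq> {x \<in> space Sd. c\<^sup>2 \<le> x\<^sup>2 * indicator {c<..} x}"
      using c by (auto simp: spSd intro!: power_mono)
    show "{x \<in> space Sd. c\<^sup>2 \<le> x\<^sup>2 * indicator {c<..} x} \<in> sets Sd"
      unfolding sSd spSd by measurable
  qed
  also have "\<dots> \<le> sq_tail Sd c / c^2"
    unfolding sq_tail_def
  proof (rule integral_Markov_inequality_measure[OF _ sets.top[of Sd]])
    show "integrable Sd (\<lambda>x. x\<^sup>2 * indicator {c<..} x)"
      by (rule integrable_real_mult_indicator[OF _ int]) (simp add: sSd)
  qed (use c in auto)
  finally show ?thesis .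
qed

lemma sq_tail_tendsto_0:
  fixes cs :: "nat \<Rightarrow> real"
  assumes sSd: "sets Sd = sets borel" and int: "integrable Sd (\<lambda>x. x^2)"
    and cs: "filterlim cs at_top sequentially"
  shows "(\<lambda>n. sq_tail Sd (cs n)) \<longlonglongrightarrow> 0"
proof -
  have "(\<lambda>n. \<integral>x. x^2 * indicator {cs n<..} x \<partial>Sd) \<longlonglongrightarrow> (\<integral>x. 0 \<partial>Sd)"
  proof (rule integral_dominated_convergence[where w="\<lambda>x. x^2"])
    show "(\<lambda>x. x\<^sup>2 * indicator {cs i<..} x) \<in> borel_measurable Sd" for i
      unfolding measurable_cong_sets[OF sSd refl] by measurable
    show "AE x in Sd. (\<lambda>i. x\<^sup>2 * indicator {cs i<..} x) \<longlonglongrightarrow> 0"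
    proof (rule AE_I2, rule tendsto_eventually)
      fix x
      have "eventually (\<lambda>i. x \<le> cs i) sequentially"
        using cs by (simp add: filterlim_at_top)
      thus "eventually (\<lambda>i. x\<^sup>2 * indicator {cs i<..} x = 0) sequentially"
        by eventually_elim auto
    qed
  qed (auto simp: int indicator_def)
  thus ?thesis by (simp add: sq_tail_def)
qed

locale exponential_clock_model = prob_space M
  for M :: "'a measure" +
  fixes T S :: "nat \<Rightarrow> nat \<Rightarrow> 'a \<Rightarrow> real" and Sd :: "real measure" and lam :: real
  assumes lam_pos: "0 < lam"
    and clocks: "\<And>n i. i < n \<Longrightarrow> distributed M lborel (T n i) (exponential_density lam)"
    and services: "\<And>n j. 1 \<le> j \<Longrightarrow> distr M borel (S n j) = Sd"
    and Sd_sq: "integrable Sd (\<lambda>x. x ^ 2)"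
    and indep: "\<And>n. indep_vars (\<lambda>_. borel) (\<lambda>x. case x of Inl i \<Rightarrow> T n i | Inr j \<Rightarrow> S n j)
        (Inl ` {..<n} \<union> Inr ` {1..})"
begin

lemma clock_measurable: "i < n \<Longrightarrow> T n i \<in> borel_measurable M"
  using distributed_measurable[OF clocks] by simp

lemma service_measurable: "1 \<le> j \<Longrightarrow> S n j \<in> borel_measurable M"
  using indep[of n] unfolding indep_vars_def by (auto dest: bspec[of _ _ "Inr j"])

lemma sets_Sd: "sets Sd = sets borel"
  by (metis services[of 1 0] sets_distr order_refl)

lemma prob_large_service_le:
  assumes "0 < c" "0 \<le> y"
  shows "prob (\<Union>k\<in>{k. 1 \<le> k \<and> real k \<le> y}. {\<omega>\<in>space M. c < S n k \<omega>})
    \<le> y * sq_tail Sd c / c^2"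
proof -
  have "prob (\<Union>k\<in>{k. 1 \<le> k \<and> real k \<le> y}. {\<omega>\<in>space M. c < S n k \<omega>})
      \<le> (\<Sum>k\<in>{k. 1 \<le> k \<and> real k \<le> y}. prob {\<omega>\<in>space M. c < S n k \<omega>})"
  proof (intro measure_UNION_le finite_index_set)
    fix k assume "k \<in> {k. 1 \<le> k \<and> real k \<le> y}"
    hence [measurable]: "S n k \<in> borel_measurable M" by (simp add: service_measurable)
    show "{\<omega>\<in>space M. c < S n k \<omega>} \<in> events" by measurable
  qed
  also have "\<dots> \<le> (\<Sum>k\<in>{k. 1 \<le> k \<and> real k \<le> y}. sq_tail Sd c / c^2)"
    using prob_gt_le_sq_tail[OF prob_space_axioms service_measurable services Sd_sq \<open>0 < c\<close>]
    by (intro sum_mono) simp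
  also have "\<dots> = real (card {k. 1 \<le> k \<and> real k \<le> y}) * (sq_tail Sd c / c^2)"
    by simp
  also have "\<dots> \<le> y * (sq_tail Sd c / c^2)"
    using card_index_set_le[OF \<open>0 \<le> y\<close>] sq_tail_nonneg by (intro mult_right_mono) simp_all
  finally show ?thesis by simp
qed

lemma prob_negative_clock_eq_0: "prob (\<Union>i<n. {\<omega>\<in>space M. T n i \<omega> < 0}) = 0"
proof -
  have "prob {\<omega>\<in>space M. T n i \<omega> < 0} = 0" if i: "i < n" for i
  proof -
    note [measurable] = clock_measurable[OF i]
    have "prob {\<omega>\<in>space M. T n i \<omega> < 0} \<le> prob {\<omega>\<in>space M. T n i \<omega> \<le> 0}"
      by (intro finite_measure_mono) auto
    also have "\<dots> = 0"
      using prob_exponential_le[OF clocks[OF i] lam_pos, of 0] by (simp add: exp_cdf_def)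
    finally show ?thesis by (simp add: measure_le_0_iff)
  qed
  moreover have "prob (\<Union>i<n. {\<omega>\<in>space M. T n i \<omega> < 0})
      \<le> (\<Sum>i<n. prob {\<omega>\<in>space M. T n i \<omega> < 0})"
  proof (intro measure_UNION_le)
    fix i assume "i \<in> {..<n}"
    hence [measurable]: "T n i \<in> borel_measurable M" by (simp add: clock_measurable)
    show "{\<omega>\<in>space M. T n i \<omega> < 0} \<in> events" by measurable
  qed simp
  ultimately show ?thesis by (simp add: measure_le_0_iff)
qed

lemma prob_crowded_clock_window_le:
  assumes "0 < h" "0 < a" "real n * (exp 1 - 1) * (3 * lam * h) \<le> a / 2"
  shows "prob (\<Union>j. {\<omega>\<in>space M. a < (\<Sum>i<n. indicator (window h j) (T n i \<omega>))})
    \<le> 3 * (real n * (exp 1 - 1) * exp (a/2) / (exp a - 1))"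
proof -
  define X where "X = (\<lambda>x. case x of Inl i \<Rightarrow> T n i | Inr j \<Rightarrow> S n j)"
  have "indep_vars (\<lambda>_. borel) X (Inl ` {..<n})"
    by (rule indep_vars_subset[OF indep[of n, folded X_def]]) auto
  moreover have card: "card (Inl ` {..<n} :: (nat + nat) set) = n"
    by (simp add: card_image)
  ultimately have "prob (\<Union>j. {\<omega>\<in>space M. a < (\<Sum>i\<in>Inl ` {..<n}. indicator (window h j) (X i \<omega>))})
      \<le> 3 * (real n * (exp 1 - 1) * exp (a/2) / (exp a - 1))"
    using assms clocks by (subst card[symmetric], intro prob_crowded_window_le[OF lam_pos])
      (auto simp: X_def)
  thus ?thesis by (simp add: sum.reindex X_def)
qed

lemma prob_maxA_gt_le:
  assumes h: "0 < h" and a: "0 < a" and c: "0 < c" and Tm: "0 \<le> Tm"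
    and crowd: "real n * (exp 1 - 1) * (3 * lam * h) \<le> a / 2"
    and cn: "0 \<le> 1 + \<beta> * real n powr (-1/3)"
    and ch: "c / real n * (1 + \<beta> * real n powr (-1/3)) \<le> h"
  shows "prob {\<omega> \<in> space M. a < real (maxA \<beta> Tm n (\<lambda>i. T n i \<omega>) (\<lambda>j. S n j \<omega>))}
    \<le> Tm * real n powr (2/3) * sq_tail Sd c / c^2
       + 3 * (real n * (exp 1 - 1) * exp (a/2) / (exp a - 1))"
proof -
  define E1 where "E1 = (\<Union>k\<in>{k. 1 \<le> k \<and> real k \<le> Tm * real n powr (2/3)}.
    {\<omega>\<in>space M. c < S n k \<omega>})"
  define E2 where "E2 = (\<Union>i<n. {\<omega>\<in>space M. T n i \<omega> < 0})"
  define E3 where "E3 = (\<Union>j. {\<omega>\<in>space M. a < (\<Sum>i<n. indicator (window h j) (T n i \<omega>))})"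
  have sets: "E1 \<in> events" "E2 \<in> events" "E3 \<in> events"
    unfolding E1_def E2_def E3_def
    using service_measurable clock_measurable finite_index_set
    by (auto intro!: sets.finite_UN sets.countable_UN' borel_measurable_sum)
  have "{\<omega> \<in> space M. a < real (maxA \<beta> Tm n (\<lambda>i. T n i \<omega>) (\<lambda>j. S n j \<omega>))} \<subseteq> E1 \<union> E2 \<union> E3"
  proof (intro subsetI)
    fix \<omega> assume \<omega>: "\<omega> \<in> {\<omega> \<in> space M. a < real (maxA \<beta> Tm n (\<lambda>i. T n i \<omega>) (\<lambda>j. S n j \<omega>))}"
    show "\<omega> \<in> E1 \<union> E2 \<union> E3"
    proof (rule ccontr)
      assume "\<omega> \<notin> E1 \<union> E2 \<union> E3"
      hence not_E12: "\<forall>k. 1 \<le> k \<and> real k \<le> Tm * real n powr (2/3) \<longrightarrow> S n k \<omega> \<le> c"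
          "\<forall>i<n. 0 \<le> T n i \<omega>" and not_E3: "\<omega> \<notin> E3"
        using \<omega> by (auto simp: E1_def E2_def not_less)
      have "\<forall>k. 1 \<le> k \<and> real k \<le> Tm * real n powr (2/3) \<longrightarrow> svc_D \<beta> n (\<lambda>j. S n j \<omega>) k \<le> h"
        using not_E12(1) svc_D_le[where s="\<lambda>j. S n j \<omega>", OF _ cn ch] by blast
      then obtain j where "a < (\<Sum>i<n. indicator (window h j) (T n i \<omega>))"
        using maxA_gt_imp_crowded_window[OF h less_imp_le[OF a] not_E12(2)] \<omega> by blast
      thus False using not_E3 \<omega> by (auto simp: E3_def)
    qed
  qed
  hence "prob {\<omega> \<in> space M. a < real (maxA \<beta> Tm n (\<lambda>i. T n i \<omega>) (\<lambda>j. S n j \<omega>))}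
      \<le> prob (E1 \<union> E2 \<union> E3)"
    using sets by (intro finite_measure_mono) auto
  also have "\<dots> \<le> prob E1 + prob E2 + prob E3"
    using sets by (meson add_right_mono measure_Un_le order_trans sets.Un)
  also have "\<dots> \<le> Tm * real n powr (2/3) * sq_tail Sd c / c^2 + 0
      + 3 * (real n * (exp 1 - 1) * exp (a/2) / (exp a - 1))"
  proof (intro add_mono)
    show "prob E1 \<le> Tm * real n powr (2/3) * sq_tail Sd c / c^2"
      unfolding E1_def using Tm by (intro prob_large_service_le[OF c]) simp
    show "prob E2 \<le> 0"
      unfolding E2_def by (simp add: prob_negative_clock_eq_0)
    show "prob E3 \<le> 3 * (real n * (exp 1 - 1) * exp (a/2) / (exp a - 1))"
      unfolding E3_def by (rule prob_crowded_clock_window_le[OF h a crowd])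
  qed
  finally show ?thesis by simp
qed

lemma prob_scaled_maxA_le:
  assumes \<epsilon>: "0 < \<epsilon>" and Tm: "0 \<le> Tm" and n: "0 < n"
    and cn: "0 < 1 + \<beta> * real n powr (-1/3)"
  defines "a \<equiv> \<epsilon> * real n powr (1/3)"
  defines "h \<equiv> a / (6 * (exp 1 - 1) * lam * real n)"
  defines "c \<equiv> h * real n / (1 + \<beta> * real n powr (-1/3))"
  shows "prob {\<omega> \<in> space M.
      \<epsilon> < real n powr (-1/3) * real (maxA \<beta> Tm n (\<lambda>i. T n i \<omega>) (\<lambda>j. S n j \<omega>))}
    \<le> Tm * (real n powr (2/3) / c^2) * sq_tail Sd c
      + 3 * (real n * (exp 1 - 1) * exp (a / 2) / (exp a - 1))"
proof -
  have pos: "0 < a" "0 < h" "0 < c"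
    using n cn \<epsilon> lam_pos by (simp_all add: a_def h_def c_def)
  have crowd: "real n * (exp 1 - 1) * (3 * lam * h) \<le> a / 2"
    using n lam_pos by (simp add: h_def field_simps)
  have ch: "c / real n * (1 + \<beta> * real n powr (-1/3)) \<le> h"
    using n cn by (simp add: c_def)
  have scale: "\<epsilon> < real n powr (-1/3) * x \<longleftrightarrow> a < x" for x
    unfolding a_def by (rule less_mult_powr_iff) (use n in simp)
  have "prob {\<omega> \<in> space M.
        \<epsilon> < real n powr (-1/3) * real (maxA \<beta> Tm n (\<lambda>i. T n i \<omega>) (\<lambda>j. S n j \<omega>))}
      = prob {\<omega> \<in> space M. a < real (maxA \<beta> Tm n (\<lambda>i. T n i \<omega>) (\<lambda>j. S n j \<omega>))}"
    by (simp only: scale)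
  also have "\<dots> \<le> Tm * real n powr (2/3) * sq_tail Sd c / c^2
      + 3 * (real n * (exp 1 - 1) * exp (a / 2) / (exp a - 1))"
    using cn by (intro prob_maxA_gt_le[OF pos(2,1,3) Tm crowd _ ch]) simp
  finally show ?thesis by simp
qed

lemma prob_scaled_maxA_tendsto_0:
  assumes \<epsilon>: "0 < \<epsilon>" and Tm: "0 < Tm"
  shows "(\<lambda>n. prob {\<omega> \<in> space M.
    \<epsilon> < real n powr (-1/3) * real (maxA \<beta> Tm n (\<lambda>i. T n i \<omega>) (\<lambda>j. S n j \<omega>))}) \<longlonglongrightarrow> 0"
proof -
  define K :: real where "K = 6 * (exp 1 - 1)"
  have "0 < K" by (simp add: K_def)
  define cn where "cn n = 1 + \<beta> * real n powr (-1/3)" for n :: nat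
  define a where "a n = \<epsilon> * real n powr (1/3)" for n :: nat
  define h where "h n = a n / (K * lam * real n)" for n :: nat
  define c where "c n = h n * real n / cn n" for n :: nat
  define b where "b n = Tm * (real n powr (2/3) / (c n)^2) * sq_tail Sd (c n)
    + 3 * (real n * (exp 1 - 1) * exp (a n / 2) / (exp (a n) - 1))" for n
  have "cn \<longlonglongrightarrow> 1"
    unfolding cn_def by real_asymp
  hence "eventually (\<lambda>n. 0 < cn n) sequentially"
    by (rule order_tendstoD) simp
  hence bound: "eventually (\<lambda>n. prob {\<omega> \<in> space M.
      \<epsilon> < real n powr (-1/3) * real (maxA \<beta> Tm n (\<lambda>i. T n i \<omega>) (\<lambda>j. S n j \<omega>))} \<le> b n)
      sequentially"
    using eventually_gt_at_top[of 0]
  proof eventually_elim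
    case (elim n)
    show ?case
      unfolding b_def c_def h_def a_def cn_def K_def
      by (rule prob_scaled_maxA_le) (use \<epsilon> Tm elim in \<open>simp_all add: cn_def\<close>)
  qed
  have "(\<lambda>n. real n powr (2/3) / (c n)^2) \<longlonglongrightarrow> (K * lam / \<epsilon>)^2"
    unfolding c_def h_def a_def cn_def using \<epsilon> lam_pos \<open>0 < K\<close>
    by (real_asymp simp: field_simps power2_eq_square)
  moreover have "filterlim c at_top sequentially"
    unfolding c_def h_def a_def cn_def K_def using \<epsilon> lam_pos by real_asymp
  hence "(\<lambda>n. sq_tail Sd (c n)) \<longlonglongrightarrow> 0" by (rule sq_tail_tendsto_0[OF sets_Sd Sd_sq])
  moreover have "(\<lambda>n. 3 * (real n * (exp 1 - 1) * exp (a n / 2) / (exp (a n) - 1))) \<longlonglongrightarrow> 0"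
    unfolding a_def using \<epsilon> by real_asymp
  ultimately have "b \<longlonglongrightarrow> Tm * (K * lam / \<epsilon>)^2 * 0 + 0"
    unfolding b_def by (intro tendsto_add tendsto_mult tendsto_const)
  hence "b \<longlonglongrightarrow> 0" by simp
  show ?thesis
    by (rule tendsto_sandwich[OF _ bound tendsto_const[of 0] \<open>b \<longlonglongrightarrow> 0\<close>]) simp
qed

end

theorem mainTheorem4:
  fixes M :: "'a measure" and T :: "nat \<Rightarrow> nat \<Rightarrow> 'a \<Rightarrow> real"
    and S :: "nat \<Rightarrow> nat \<Rightarrow> 'a \<Rightarrow> real" and Sd :: "real measure"
    and lam \<beta> Tm :: real
  assumes "prob_space M"
    and "lam > 0"
    and clocks: "\<And>n i. i < n \<Longrightarrow> distributed M lborel (T n i) (exponential_density lam)"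
    and services: "\<And>n j. 1 \<le> j \<Longrightarrow> distr M borel (S n j) = Sd"
    and Sd_nonneg: "AE x in Sd. 0 \<le> x"
    and Sd_sq: "integrable Sd (\<lambda>x. x ^ 2)"
    and heavy: "lam * (\<integral>x. x \<partial>Sd) = 1"
    and indep: "\<And>n. prob_space.indep_vars M (\<lambda>_. borel)
        (\<lambda>x. case x of Inl i \<Rightarrow> T n i | Inr j \<Rightarrow> S n j)
        (Inl ` {..<n} \<union> Inr ` {1..})"
    and "Tm > 0"
  shows "conv_prob_zero M
     (\<lambda>n \<omega>. real n powr (-1/3) * real (maxA \<beta> Tm n (\<lambda>i. T n i \<omega>) (\<lambda>j. S n j \<omega>)))"
proof -
  interpret exponential_clock_model M T S Sd lam
    using assms by (simp add: exponential_clock_model_def exponential_clock_model_axioms_def)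
  show ?thesis
    unfolding conv_prob_zero_def
    using prob_scaled_maxA_tendsto_0[OF _ \<open>Tm > 0\<close>] by simp
qed

end
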